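(* Let $\mathcal{A}$ be the automaton whose set of states is $$S=\Big\{\pm\sum_{i=0}^3c_i\alpha^i : c_i\in\{0,1\},\ c_0c_1c_2c_3\neq1111\Big\}\cup\{\pm(\alpha^{-1}+1+\alpha^2),\ \pm(\alpha^{-2}+\alpha^{-1}+\alpha),\ \pm(\alpha^{-3}+\alpha^{-2}+1+\alpha^3)\},$$ whose edges are the triples $(s,(a,b),t)\in S\times\{0,1\}^2\times S$ with $t=\frac{s}{\alpha}+(a-b)\alpha^3$, and whose initial state is $0$. Say that a sequence $(a_n,b_n)_{n\ge l}$ in $\{0,1\}^2$ is an infinite path of $\mathcal{A}$ beginning in the initial state if there are states $(e_n)_{n\ge l}$ in $S$ with $e_l=0$ and $(e_n,(a_n,b_n),e_{n+1})$ an edge for all $n\ge l$. Then for all $(\varepsilon_i)_{i\ge l}$ and $(\varepsilon'_i)_{i\ge l}$ in $\mathcal{D}^\infty$, the following are equivalent: (1) $\sum_{i\ge l}\varepsilon_i\alpha^i=\sum_{i\ge l}\varepsilon'_i\alpha^i$; (2) $(\varepsilon_i,\varepsilon'_i)_{i\ge l}$ is an infinite path in $\mathcal{A}$ beginning in the initial state.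
   Context: Let $P(x)=x^4-x^3-x^2-x-1$. Its roots are $\beta=\beta_1\approx 1.9275$, a real root $\beta_2\approx-0.7748$, and a pair of complex conjugate roots $\beta_3\approx-0.0763+0.8147i$ and $\overline{\beta_3}$. For $i\in\mathbb{Z}$ put $\alpha^i=(\beta_2^i,\beta_3^i)\in\mathbb{R}\times\mathbb{C}$, with $\alpha^0=1=(1,1)$; arithmetic in $\mathbb{R}\times\mathbb{C}$ is componentwise and an integer $n$ is identified with $(n,n)$. Let $\mathcal{D}^\infty$ be the set of sequences $(\varepsilon_i)_{i\ge l}$, $l\in\mathbb{Z}$, with $\varepsilon_i\in\{0,1\}$ and containing no four consecutive $1$'s. *)

theory Defs
  imports "HOL-Analysis.Analysis"
begin

definition beta2 :: real where
  "beta2 = (THE x::real. x^4 - x^3 - x^2 - x - 1 = 0 \<and> x < 0)"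

definition beta3 :: complex where
  "beta3 = (THE z::complex. z^4 - z^3 - z^2 - z - 1 = 0 \<and> Im z > 0)"

text \<open>alpha^i in R x C, componentwise.\<close>
definition apow :: "int \<Rightarrow> real \<times> complex" where
  "apow i = (beta2 powi i, beta3 powi i)"

definition div_alpha :: "real \<times> complex \<Rightarrow> real \<times> complex" where
  "div_alpha s = (fst s / beta2, snd s / beta3)"

definition in_Dinf :: "int \<Rightarrow> (int \<Rightarrow> nat) \<Rightarrow> bool" where
  "in_Dinf l eps \<longleftrightarrow> (\<forall>i\<ge>l. eps i \<in> {0,1}) \<and>
     (\<forall>i\<ge>l. \<not> (eps i = 1 \<and> eps (i+1) = 1 \<and> eps (i+2) = 1 \<and> eps (i+3) = 1))"

definition aval :: "int \<Rightarrow> (int \<Rightarrow> nat) \<Rightarrow> real \<times> complex" where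
  "aval l eps = (\<Sum>n. real (eps (l + int n)) *\<^sub>R apow (l + int n))"

definition states :: "(real \<times> complex) set" where
  "states =
    {s *\<^sub>R (\<Sum>i<4. c i *\<^sub>R apow (int i)) | s c.
        s \<in> {-1, 1} \<and> (\<forall>i<4. c i \<in> {0::real, 1}) \<and> \<not> (\<forall>i<4. c i = 1)}
    \<union> {s *\<^sub>R x | s x. s \<in> {-1, 1::real} \<and>
        x \<in> {apow (-1) + apow 0 + apow 2,
              apow (-2) + apow (-1) + apow 1,
              apow (-3) + apow (-2) + apow 0 + apow 3}}"

definition is_edge :: "real \<times> complex \<Rightarrow> nat \<times> nat \<Rightarrow> real \<times> complex \<Rightarrow> bool" where
  "is_edge s ab t \<longleftrightarrow> s \<in> states \<and> t \<in> states \<and> fst ab \<in> {0,1} \<and> snd ab \<in> {0,1} \<and>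
     t = div_alpha s + (real (fst ab) - real (snd ab)) *\<^sub>R apow 3"

definition is_path_from_init :: "int \<Rightarrow> (int \<Rightarrow> nat) \<Rightarrow> (int \<Rightarrow> nat) \<Rightarrow> bool" where
  "is_path_from_init l a b \<longleftrightarrow>
     (\<exists>e :: int \<Rightarrow> real \<times> complex. e l = 0 \<and> (\<forall>n\<ge>l. e n \<in> states \<and> is_edge (e n) (a n, b n) (e (n+1))))"

end

theory Submission
  imports Defs
begin

text \<open>Two expansions have the same value iff the digit differences \<open>d\<^sub>n \<in> {-1, 0, 1}\<close> give a
  vanishing series \<open>\<Sum> d\<^sub>n \<beta>\<^sup>n\<close> at both conjugates \<open>\<beta> = \<beta>\<^sub>2, \<beta>\<^sub>3\<close>, which lie inside the unit disc.
  The orbit \<open>E\<^sub>0 = 0\<close>, \<open>E\<^sub>m\<^sub>+\<^sub>1 = E\<^sub>m / \<alpha> + d\<^sub>m \<alpha>\<^sup>3\<close> satisfies \<open>\<alpha>\<^sup>m E\<^sub>m = \<alpha>\<^sup>4 \<Sum>\<^sub>j\<^sub><\<^sub>m d\<^sub>j \<alpha>\<^sup>j\<close>,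
  so the series vanish iff the orbit is bounded, and then \<open>|E\<^sub>m| \<le> |\<beta>|\<^sup>4 / (1 - |\<beta>|)\<close>.
  A path of the automaton is such an orbit through the finite state set, hence bounded.
  Conversely, \<open>E\<^sub>m\<close> has integer coordinates in the basis \<open>1, \<alpha>, \<alpha>\<^sup>2, \<alpha>\<^sup>3\<close>; certified interval
  arithmetic bounds these coordinates, and an exhaustive search eight steps ahead shows that a
  bounded orbit starting in a state can only leave the state set towards \<open>\<plusminus>(1 + \<alpha> + \<alpha>\<^sup>2 + \<alpha>\<^sup>3)\<close>.
  Reaching that point takes four equal non-zero digits in a row, i.e. four consecutive \<open>1\<close>s in one of
  the two expansions, which \<open>D\<^sup>\<infinity>\<close> excludes.\<close>

section \<open>Fixed-point interval arithmetic\<close>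

lemma mult_between_corners:
  fixes x y :: real
  assumes "a \<le> x" "x \<le> b" "c \<le> y" "y \<le> d"
    and "\<forall>u\<in>{a, b}. \<forall>v\<in>{c, d}. L \<le> u * v \<and> u * v \<le> H"
  shows "L \<le> x * y \<and> x * y \<le> H"
proof -
  have edge: "L \<le> u * y \<and> u * y \<le> H" if "u \<in> {a, b}" for u
  proof (cases "0 \<le> u")
    case True
    then have "u * c \<le> u * y" "u * y \<le> u * d" using assms(3,4) by (simp_all add: mult_left_mono)
    then show ?thesis using assms(5) that by fastforce
  next
    case False
    then have "u * d \<le> u * y" "u * y \<le> u * c" using assms(3,4) by (simp_all add: mult_left_mono_neg)
    then show ?thesis using assms(5) that by fastforce
  qed
  have "min (a * y) (b * y) \<le> x * y \<and> x * y \<le> max (a * y) (b * y)"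
    using assms(1,2) by (cases "0 \<le> y") (auto intro: mult_right_mono mult_right_mono_neg simp: min_def max_def)
  moreover have "L \<le> a * y \<and> a * y \<le> H" "L \<le> b * y \<and> b * y \<le> H" using edge by auto
  ultimately show ?thesis by (auto simp: min_def max_def split: if_splits)
qed

definition enclosed :: "real \<Rightarrow> int \<times> int \<Rightarrow> bool" where
  "enclosed x I \<longleftrightarrow> real_of_int (fst I) \<le> 1000000000000 * x \<and> 1000000000000 * x \<le> real_of_int (snd I)"

lemma enclosed_mult:
  fixes a b c d l h :: int
  assumes "enclosed x (a, b)" "enclosed y (c, d)"
    and "\<forall>u\<in>{a, b}. \<forall>v\<in>{c, d}. l * 1000000000000 \<le> u * v \<and> u * v \<le> h * 1000000000000"
  shows "enclosed (x * y) (l, h)"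
proof -
  let ?S = "1000000000000 :: real"
  have corner: "of_int l * ?S \<le> of_int u * of_int v \<and> of_int u * of_int v \<le> of_int h * ?S"
    if "u \<in> {a, b}" "v \<in> {c, d}" for u v
  proof -
    have "l * 1000000000000 \<le> u * v" "u * v \<le> h * 1000000000000" using assms(3) that by auto
    then have "real_of_int (l * 1000000000000) \<le> of_int (u * v)" "of_int (u * v) \<le> real_of_int (h * 1000000000000)"
      by (simp_all only: of_int_le_iff)
    then show ?thesis by simp
  qed
  have "of_int l * ?S \<le> (?S * x) * (?S * y) \<and> (?S * x) * (?S * y) \<le> of_int h * ?S"
    by (rule mult_between_corners[of "of_int a" _ "of_int b" "of_int c" _ "of_int d"])
       (use assms(1,2) corner in \<open>auto simp: enclosed_def\<close>)
  then show ?thesis unfolding enclosed_def by (simp add: algebra_simps)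
qed

lemma enclosed_sqrt:
  fixes a b l h :: int
  assumes "enclosed x (a, b)" "0 \<le> l" "l * l \<le> a * 1000000000000" "0 \<le> h" "b * 1000000000000 \<le> h * h"
  shows "enclosed (sqrt x) (l, h)"
proof -
  let ?S = "1000000000000 :: real"
  have "real_of_int (l * l) \<le> of_int (a * 1000000000000)" "real_of_int (b * 1000000000000) \<le> of_int (h * h)"
    using assms(3,5) by (simp_all only: of_int_le_iff)
  then have "of_int l * of_int l \<le> ?S * (?S * x)" "?S * (?S * x) \<le> of_int h * of_int h"
    using assms(1) unfolding enclosed_def by (auto simp: mult.commute intro: order_trans)
  then have "sqrt (of_int l * of_int l) \<le> sqrt (?S * (?S * x))" "sqrt (?S * (?S * x)) \<le> sqrt (of_int h * of_int h)"
    by (simp_all only: real_sqrt_le_iff)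
  moreover have "sqrt (?S * (?S * x)) = ?S * sqrt x" by (simp add: real_sqrt_mult)
  ultimately show ?thesis using assms(2,4) unfolding enclosed_def by simp
qed

type_synonym 'a quad = "'a \<times> 'a \<times> 'a \<times> 'a"

fun quad_comb :: "int quad \<Rightarrow> real quad \<Rightarrow> real" where
  "quad_comb (c0, c1, c2, c3) (x0, x1, x2, x3) = of_int c0 * x0 + of_int c1 * x1 + of_int c2 * x2 + of_int c3 * x3"

fun enclosed4 :: "real quad \<Rightarrow> (int \<times> int) quad \<Rightarrow> bool" where
  "enclosed4 (x0, x1, x2, x3) (I0, I1, I2, I3) \<longleftrightarrow>
     enclosed x0 I0 \<and> enclosed x1 I1 \<and> enclosed x2 I2 \<and> enclosed x3 I3"

fun scale_encl :: "int \<Rightarrow> int \<times> int \<Rightarrow> int \<times> int" where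
  "scale_encl c (a, b) = (if 0 \<le> c then (c * a, c * b) else (c * b, c * a))"

fun add_encl :: "int \<times> int \<Rightarrow> int \<times> int \<Rightarrow> int \<times> int" where
  "add_encl (a, b) (c, d) = (a + c, b + d)"

fun comb_encl :: "int quad \<Rightarrow> (int \<times> int) quad \<Rightarrow> int \<times> int" where
  "comb_encl (c0, c1, c2, c3) (I0, I1, I2, I3) =
     add_encl (add_encl (add_encl (scale_encl c0 I0) (scale_encl c1 I1)) (scale_encl c2 I2)) (scale_encl c3 I3)"

fun sq_lower :: "int \<times> int \<Rightarrow> int" where
  "sq_lower (a, b) = (if 0 < a then a * a else if b < 0 then b * b else 0)"

lemma enclosed_scale:
  assumes "enclosed x I"
  shows "enclosed (of_int c * x) (scale_encl c I)"
proof (cases I)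
  case (Pair a b)
  have "of_int c * of_int a \<le> of_int c * (1000000000000 * x) \<and> of_int c * (1000000000000 * x) \<le> of_int c * of_int b"
    if "0 \<le> c" using assms that unfolding Pair enclosed_def by (simp add: mult_left_mono)
  moreover have "of_int c * of_int b \<le> of_int c * (1000000000000 * x) \<and> of_int c * (1000000000000 * x) \<le> of_int c * of_int a"
    if "\<not> 0 \<le> c" using assms that unfolding Pair enclosed_def by (simp add: mult_left_mono_neg)
  ultimately show ?thesis unfolding Pair enclosed_def by (auto simp: algebra_simps)
qed

lemma enclosed_add: "enclosed x I \<Longrightarrow> enclosed y J \<Longrightarrow> enclosed (x + y) (add_encl I J)"
  by (cases I; cases J) (simp add: enclosed_def distrib_left)

lemma enclosed_comb:
  assumes "enclosed4 xs Is"
  shows "enclosed (quad_comb c xs) (comb_encl c Is)"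
proof -
  obtain c0 c1 c2 c3 where c: "c = (c0, c1, c2, c3)" by (cases c rule: prod_cases4)
  obtain x0 x1 x2 x3 where xs: "xs = (x0, x1, x2, x3)" by (cases xs rule: prod_cases4)
  obtain I0 I1 I2 I3 where Is: "Is = (I0, I1, I2, I3)" by (cases Is rule: prod_cases4)
  show ?thesis
    using assms unfolding c xs Is
    by (simp del: scale_encl.simps add_encl.simps) (intro enclosed_add enclosed_scale; simp)
qed

lemma sq_lower_le:
  assumes "enclosed x I"
  shows "of_int (sq_lower I) \<le> (1000000000000 * x)^2"
proof -
  obtain a b where I: "I = (a, b)" by (cases I)
  let ?X = "1000000000000 * x"
  have "of_int a \<le> ?X" "?X \<le> of_int b" using assms unfolding I enclosed_def by simp_all
  consider "0 < a" | "\<not> 0 < a" "b < 0" | "\<not> 0 < a" "\<not> b < 0" by blast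
  then show ?thesis
  proof cases
    case 1
    then have "of_int a * of_int a \<le> ?X * ?X" using \<open>of_int a \<le> ?X\<close> by (intro mult_mono) auto
    then show ?thesis using 1 unfolding I by (simp add: power2_eq_square)
  next
    case 2
    then have "(- of_int b) * (- of_int b) \<le> (- ?X) * (- ?X)" using \<open>?X \<le> of_int b\<close>
      by (intro mult_mono) auto
    then show ?thesis using 2 unfolding I by (simp add: power2_eq_square)
  next
    case 3
    then show ?thesis unfolding I by simp
  qed
qed

section \<open>The roots of the Tetranacci polynomial\<close>

definition tetranacci_poly :: "'a::comm_ring_1 \<Rightarrow> 'a" where
  "tetranacci_poly x = x^4 - x^3 - x^2 - x - 1"

lemma tetranacci_poly_of_real:
  "tetranacci_poly (of_real x :: 'a::{real_algebra_1,comm_ring_1}) = of_real (tetranacci_poly x)"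
  by (simp add: tetranacci_poly_def)

lemma inverse_tetranacci_root:
  fixes x :: "'a::field"
  assumes "tetranacci_poly x = 0"
  shows "inverse x = x^3 - x^2 - x - 1"
proof (rule inverse_unique)
  show "x * (x^3 - x^2 - x - 1) = 1"
    using assms unfolding tetranacci_poly_def by (simp add: algebra_simps eval_nat_numeral)
qed

lemma tetranacci_poly_real_root_enclosed:
  fixes lo hi :: int
  assumes "lo \<le> hi"
    and "tetranacci_poly (lo / 1000000000000) * tetranacci_poly (hi / 1000000000000) \<le> (0::real)"
  shows "\<exists>x. enclosed x (lo, hi) \<and> tetranacci_poly x = 0"
proof -
  let ?a = "lo / 1000000000000 :: real" and ?b = "hi / 1000000000000 :: real"
  have cont: "continuous_on {?a..?b} (tetranacci_poly :: real \<Rightarrow> real)"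
    unfolding tetranacci_poly_def by (intro continuous_intros)
  have "?a \<le> ?b" using assms(1) by simp
  from assms(2) consider "tetranacci_poly ?a \<le> 0" "0 \<le> tetranacci_poly ?b"
    | "tetranacci_poly ?b \<le> 0" "0 \<le> tetranacci_poly ?a"
    by (auto simp: mult_le_0_iff)
  then obtain x where "?a \<le> x" "x \<le> ?b" "tetranacci_poly x = 0"
    by cases (use IVT'[OF _ _ \<open>?a \<le> ?b\<close> cont] IVT2'[OF _ _ \<open>?a \<le> ?b\<close> cont] in blast)+
  then show ?thesis unfolding enclosed_def by (intro exI[of _ x]) (simp add: field_simps)
qed

lemma tetranacci_poly_negative_root_unique:
  fixes x y :: real
  assumes "x < 0" "y < 0" "tetranacci_poly x = 0" "tetranacci_poly y = 0"
  shows "x = y"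
proof -
  \<comment> \<open>On the negative axis, \<open>(x - 1) P(x) = x^5 - 2 x^4 + 1\<close> is strictly increasing.\<close>
  have increasing: "u^5 - 2 * u^4 < v^5 - 2 * v^4" if "u < v" "v < 0" for u v :: real
  proof -
    have "(-v)^5 < (-u)^5" by (rule power_strict_mono) (use that in auto)
    moreover have "(-v)^4 < (-u)^4" by (rule power_strict_mono) (use that in auto)
    ultimately show ?thesis by simp
  qed
  have "(x - 1) * tetranacci_poly x = x^5 - 2*x^4 + 1" for x :: real
    unfolding tetranacci_poly_def by (simp add: algebra_simps eval_nat_numeral)
  then have "x^5 - 2*x^4 = y^5 - 2*y^4" using assms(3,4) by (metis add_right_cancel mult_zero_right)
  then show ?thesis using increasing[of x y] increasing[of y x] assms(1,2)
    by (cases x y rule: linorder_cases) auto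
qed

definition beta1 :: real where
  "beta1 = (SOME x. enclosed x (1927561975482, 1927561975483) \<and> tetranacci_poly x = 0)"

lemma enclosed_beta1: "enclosed beta1 (1927561975482, 1927561975483)"
  and tetranacci_poly_beta1: "tetranacci_poly beta1 = 0"
proof -
  have "\<exists>x. enclosed x (1927561975482, 1927561975483) \<and> tetranacci_poly x = 0"
    by (rule tetranacci_poly_real_root_enclosed) (simp_all add: tetranacci_poly_def eval_nat_numeral)
  from someI_ex[OF this] show "enclosed beta1 (1927561975482, 1927561975483)" "tetranacci_poly beta1 = 0"
    unfolding beta1_def by auto
qed

lemma enclosed_beta2: "enclosed beta2 (-774804113216, -774804113215)"
  and tetranacci_poly_beta2: "tetranacci_poly beta2 = 0"
  and beta2_neg: "beta2 < 0"
proof -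
  have "\<exists>x. enclosed x (-774804113216, -774804113215) \<and> tetranacci_poly x = 0"
    by (rule tetranacci_poly_real_root_enclosed) (simp_all add: tetranacci_poly_def eval_nat_numeral)
  then obtain b where b: "enclosed b (-774804113216, -774804113215)" "tetranacci_poly b = 0" by blast
  then have "b < 0" unfolding enclosed_def by simp
  have "beta2 = b" unfolding beta2_def
  proof (rule the_equality)
    show "b^4 - b^3 - b^2 - b - 1 = 0 \<and> b < 0" using b \<open>b < 0\<close> by (simp add: tetranacci_poly_def)
    show "x = b" if "x^4 - x^3 - x^2 - x - 1 = 0 \<and> x < 0" for x
      using that b(2) \<open>b < 0\<close> tetranacci_poly_negative_root_unique[of x b] by (simp add: tetranacci_poly_def)
  qed
  with b \<open>b < 0\<close> show "enclosed beta2 (-774804113216, -774804113215)" "tetranacci_poly beta2 = 0" "beta2 < 0"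
    by simp_all
qed

lemma tetranacci_poly_factor_two_roots:
  fixes a b z :: "'a::field_char_0"
  assumes "tetranacci_poly a = 0" "tetranacci_poly b = 0" "a \<noteq> b"
  shows "tetranacci_poly z = (z - a) * (z - b) *
    ((z - (1 - a - b) / 2)^2 + (3*a^2 + 2*(a*b) + 3*b^2 - 2*a - 2*b - 5) / 4)"
proof -
  define q where "q = b^3 + (a - 1)*b^2 + (a^2 - a - 1)*b + (a^3 - a^2 - a - 1)"
  have "tetranacci_poly b - tetranacci_poly a = (b - a) * q"
    unfolding q_def tetranacci_poly_def by (simp add: algebra_simps eval_nat_numeral)
  then have "q = 0" using assms by simp
  have "tetranacci_poly z - tetranacci_poly a = (z - a) * (q + (z - b) *
    ((z - (1 - a - b) / 2)^2 + (3*a^2 + 2*(a*b) + 3*b^2 - 2*a - 2*b - 5) / 4))"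
    unfolding q_def tetranacci_poly_def by (simp add: field_simps eval_nat_numeral)
  with \<open>q = 0\<close> assms(1) show ?thesis by (simp add: mult.assoc)
qed

lemma enclosed_beta1_sq: "enclosed (beta1^2) (3715495169324, 3715495169328)"
  unfolding power2_eq_square by (rule enclosed_mult[OF enclosed_beta1 enclosed_beta1]) simp

lemma enclosed_beta1_beta2: "enclosed (beta1 * beta2) (-1493482947083, -1493482947080)"
  by (rule enclosed_mult[OF enclosed_beta1 enclosed_beta2]) simp

lemma enclosed_beta2_sq: "enclosed (beta2^2) (600321413854, 600321413857)"
  unfolding power2_eq_square by (rule enclosed_mult[OF enclosed_beta2 enclosed_beta2]) simp

lemma enclosed_beta2_cube: "enclosed (beta2^3) (-465131500709, -465131500705)"
  unfolding power3_eq_cube power2_eq_square[symmetric] by (rule enclosed_mult[OF enclosed_beta2_sq enclosed_beta2]) simp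

text \<open>By \<open>tetranacci_poly_factor_two_roots\<close>, the non-real roots of \<open>P\<close> are \<open>re3 \<plusminus> i \<cdot> im3\<close>.\<close>

definition disc :: real where
  "disc = 3*beta1^2 + 2*(beta1*beta2) + 3*beta2^2 - 2*beta1 - 2*beta2 - 5"

definition re3 :: real where "re3 = (1 - beta1 - beta2) / 2"

definition im3 :: real where "im3 = sqrt disc / 2"

lemma enclosed_disc: "enclosed disc (2654968130832, 2654968130863)"
  using enclosed_beta1 enclosed_beta2 enclosed_beta1_sq enclosed_beta1_beta2 enclosed_beta2_sq
  unfolding disc_def enclosed_def by (simp only: prod.sel of_int_minus of_int_numeral ring_distribs) linarith

lemma enclosed_re3: "enclosed re3 (-76378931134, -76378931133)"
  using enclosed_beta1 enclosed_beta2 unfolding re3_def enclosed_def by simp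

lemma enclosed_im3: "enclosed im3 (814703647167, 814703647173)"
proof -
  have "enclosed (sqrt disc) (1629407294334, 1629407294345)"
    by (rule enclosed_sqrt[OF enclosed_disc]) simp_all
  then show ?thesis unfolding im3_def enclosed_def by simp
qed

lemma im3_pos: "0 < im3" and im3_sq: "im3^2 = disc / 4"
  using enclosed_disc enclosed_im3 unfolding enclosed_def im3_def by (simp_all add: power_divide)

lemma tetranacci_poly_complex_factor:
  fixes z :: complex
  shows "tetranacci_poly z = (z - of_real beta1) * (z - of_real beta2) * ((z - of_real re3)^2 - (\<i> * of_real im3)^2)"
proof -
  have "beta1 \<noteq> beta2" using enclosed_beta1 beta2_neg unfolding enclosed_def by auto
  have re: "(of_real re3 :: complex) = (1 - of_real beta1 - of_real beta2) / 2"
    by (simp add: re3_def)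
  have d: "(of_real disc :: complex) = 3 * (of_real beta1)^2 + 2 * (of_real beta1 * of_real beta2)
      + 3 * (of_real beta2)^2 - 2 * of_real beta1 - 2 * of_real beta2 - 5"
    by (simp add: disc_def)
  have "tetranacci_poly z = (z - of_real beta1) * (z - of_real beta2) * ((z - of_real re3)^2 + of_real disc / 4)"
    unfolding re d
    by (rule tetranacci_poly_factor_two_roots)
       (use tetranacci_poly_beta1 tetranacci_poly_beta2 \<open>beta1 \<noteq> beta2\<close> in \<open>simp_all add: tetranacci_poly_of_real\<close>)
  then show ?thesis by (simp add: power_mult_distrib im3_sq flip: of_real_power)
qed

lemma beta3_eq: "beta3 = Complex re3 im3"
  unfolding beta3_def
proof (rule the_equality)
  show "(Complex re3 im3)^4 - (Complex re3 im3)^3 - (Complex re3 im3)^2 - Complex re3 im3 - 1 = 0 \<and> 0 < Im (Complex re3 im3)"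
    using tetranacci_poly_complex_factor[of "Complex re3 im3"] im3_pos by (simp add: tetranacci_poly_def complex_eq_iff power2_eq_square)
next
  fix z :: complex
  assume "z^4 - z^3 - z^2 - z - 1 = 0 \<and> 0 < Im z"
  then have "tetranacci_poly z = 0" "0 < Im z" by (simp_all add: tetranacci_poly_def)
  then have "z - of_real beta1 \<noteq> 0" "z - of_real beta2 \<noteq> 0" by (auto simp: complex_eq_iff)
  then have "(z - of_real re3)^2 - (\<i> * of_real im3)^2 = 0"
    using tetranacci_poly_complex_factor[of z] \<open>tetranacci_poly z = 0\<close> by simp
  moreover have "(z - of_real re3)^2 - (\<i> * of_real im3)^2
      = (z - of_real re3 - \<i> * of_real im3) * (z - of_real re3 + \<i> * of_real im3)"
    by (simp add: algebra_simps power2_eq_square)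
  ultimately have "(z - of_real re3 - \<i> * of_real im3) * (z - of_real re3 + \<i> * of_real im3) = 0"
    by simp
  then have "z - of_real re3 - \<i> * of_real im3 = 0 \<or> z - of_real re3 + \<i> * of_real im3 = 0"
    by simp
  then show "z = Complex re3 im3" using \<open>0 < Im z\<close> im3_pos by (auto simp: complex_eq_iff)
qed

lemma tetranacci_poly_beta3: "tetranacci_poly beta3 = 0"
  using tetranacci_poly_complex_factor[of beta3] by (simp add: beta3_eq complex_eq_iff power2_eq_square)

lemma beta3_nonzero: "beta3 \<noteq> 0"
  using im3_pos by (simp add: beta3_eq complex_eq_iff)

lemma beta3_powers:
  "Re (beta3^2) = re3 * re3 - disc / 4" "Im (beta3^2) = 2 * (re3 * im3)"
  "Re (beta3^3) = re3 * Re (beta3^2) - im3 * Im (beta3^2)"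
  "Im (beta3^3) = re3 * Im (beta3^2) + im3 * Re (beta3^2)"
  "(cmod beta3)^2 = re3 * re3 + disc / 4"
  using im3_sq unfolding beta3_eq cmod_power2
  by (simp_all add: power2_eq_square power3_eq_cube algebra_simps)

definition beta2_powers_encl :: "(int \<times> int) quad" where
  "beta2_powers_encl = ((1000000000000, 1000000000000), (-774804113216, -774804113215),
     (600321413854, 600321413857), (-465131500709, -465131500705))"

definition Re_beta3_powers_encl :: "(int \<times> int) quad" where
  "Re_beta3_powers_encl = ((1000000000000, 1000000000000), (-76378931134, -76378931133),
     (-657908291595, -657908291586), (151642146105, 151642146114))"

definition Im_beta3_powers_encl :: "(int \<times> int) quad" where
  "Im_beta3_powers_encl = ((0, 0), (814703647167, 814703647173),
     (-124452387526, -124452387520), (-526494744333, -526494744319))"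

lemma enclosed4_beta2_powers: "enclosed4 (1, beta2, beta2^2, beta2^3) beta2_powers_encl"
  using enclosed_beta2 enclosed_beta2_sq enclosed_beta2_cube
  unfolding beta2_powers_encl_def by (simp add: enclosed_def)

lemma enclosed4_beta3_powers:
  "enclosed4 (1, Re beta3, Re (beta3^2), Re (beta3^3)) Re_beta3_powers_encl"
  "enclosed4 (0, Im beta3, Im (beta3^2), Im (beta3^3)) Im_beta3_powers_encl"
proof -
  have "enclosed (re3 * re3) (5833741121, 5833741122)"
    by (rule enclosed_mult[OF enclosed_re3 enclosed_re3]) simp
  then have Re2: "enclosed (Re (beta3^2)) (-657908291595, -657908291586)"
    using enclosed_disc unfolding beta3_powers enclosed_def
    by (simp only: prod.sel of_int_minus of_int_numeral ring_distribs) linarith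
  have "enclosed (re3 * im3) (-62226193763, -62226193760)"
    by (rule enclosed_mult[OF enclosed_re3 enclosed_im3]) simp
  then have Im2: "enclosed (Im (beta3^2)) (-124452387526, -124452387520)"
    unfolding beta3_powers enclosed_def
    by (simp only: prod.sel of_int_minus of_int_numeral ring_distribs) linarith
  have "enclosed (re3 * Re (beta3^2)) (50250332094, 50250332097)"
    "enclosed (im3 * Im (beta3^2)) (-101391814017, -101391814011)"
    "enclosed (re3 * Im (beta3^2)) (9505540335, 9505540337)"
    "enclosed (im3 * Re (beta3^2)) (-536000284668, -536000284656)"
    by (rule enclosed_mult[OF enclosed_re3 Re2] enclosed_mult[OF enclosed_im3 Im2]
        enclosed_mult[OF enclosed_re3 Im2] enclosed_mult[OF enclosed_im3 Re2]; simp)+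
  then have "enclosed (Re (beta3^3)) (151642146105, 151642146114)"
    "enclosed (Im (beta3^3)) (-526494744333, -526494744319)"
    unfolding beta3_powers(3,4) enclosed_def
    by (simp_all only: prod.sel of_int_minus of_int_numeral ring_distribs) linarith+
  then show "enclosed4 (1, Re beta3, Re (beta3^2), Re (beta3^3)) Re_beta3_powers_encl"
    "enclosed4 (0, Im beta3, Im (beta3^2), Im (beta3^3)) Im_beta3_powers_encl"
    using enclosed_re3 enclosed_im3 Re2 Im2
    unfolding Re_beta3_powers_encl_def Im_beta3_powers_encl_def by (simp_all add: beta3_eq enclosed_def)
qed

definition orbit_bound :: "real \<Rightarrow> real" where
  "orbit_bound r = r^4 / (1 - r)"

lemma orbit_bound_mono: "0 \<le> r \<Longrightarrow> r \<le> s \<Longrightarrow> s < 1 \<Longrightarrow> orbit_bound r \<le> orbit_bound s"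
  unfolding orbit_bound_def by (rule frac_le) (auto intro: power_mono)

lemma abs_beta2_less_1: "\<bar>beta2\<bar> < 1"
  and orbit_bound_beta2: "1000000000000 * orbit_bound \<bar>beta2\<bar> \<le> 1600321413865"
proof -
  have le: "\<bar>beta2\<bar> \<le> 774804113216 / 1000000000000" using enclosed_beta2 beta2_neg unfolding enclosed_def by simp
  then show "\<bar>beta2\<bar> < 1" by simp
  have "orbit_bound \<bar>beta2\<bar> \<le> orbit_bound (774804113216 / 1000000000000)"
    by (rule orbit_bound_mono) (use le in simp_all)
  also have "\<dots> \<le> 1600321413865 / 1000000000000" by (simp add: orbit_bound_def eval_nat_numeral)
  finally show "1000000000000 * orbit_bound \<bar>beta2\<bar> \<le> 1600321413865" by simp
qed

lemma cmod_beta3_less_1: "cmod beta3 < 1"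
  and orbit_bound_beta3: "1000000000000 * orbit_bound (cmod beta3) \<le> 2467103743153"
proof -
  have "(cmod beta3)^2 \<le> (818276098783 / 1000000000000)^2"
    using enclosed_disc enclosed_re3 enclosed_mult[OF enclosed_re3 enclosed_re3, of 5833741121 5833741122]
    unfolding beta3_powers enclosed_def by (simp add: eval_nat_numeral)
  then have le: "cmod beta3 \<le> 818276098783 / 1000000000000" by (rule power2_le_imp_le) simp
  then show "cmod beta3 < 1" by simp
  have "orbit_bound (cmod beta3) \<le> orbit_bound (818276098783 / 1000000000000)"
    by (rule orbit_bound_mono) (use le in simp_all)
  also have "\<dots> \<le> 2467103743153 / 1000000000000" by (simp add: orbit_bound_def eval_nat_numeral)
  finally show "1000000000000 * orbit_bound (cmod beta3) \<le> 2467103743153" by simp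
qed

section \<open>Orbits of \<open>s \<mapsto> s / x + d x\<^sup>3\<close>\<close>

lemma orbit_scaled_eq_partial_sum:
  fixes x :: "'a::field"
  assumes "x \<noteq> 0" "E 0 = 0" "\<And>m. E (Suc m) = E m / x + of_int (dd m) * x^3"
  shows "x^m * E m = x^4 * (\<Sum>j<m. of_int (dd j) * x^j)"
proof (induction m)
  case 0
  then show ?case using assms(2) by simp
next
  case (Suc m)
  have "x^Suc m * E (Suc m) = x^m * E m + of_int (dd m) * x^(m + 4)"
    using assms(1) unfolding assms(3) by (simp add: field_simps power_add eval_nat_numeral)
  also have "\<dots> = x^4 * (\<Sum>j<Suc m. of_int (dd j) * x^j)"
    unfolding Suc by (simp add: algebra_simps power_add)
  finally show ?case .
qed

lemma power_series_bounded_coeffs: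
  fixes x :: "'a::{real_normed_field,banach}"
  assumes "norm x < 1" "\<And>j. \<bar>b j\<bar> \<le> 1"
  shows "summable (\<lambda>j. of_real (b j) * x^j)" "norm (\<Sum>j. of_real (b j) * x^j) \<le> 1 / (1 - norm x)"
proof -
  have geometric: "summable (\<lambda>j. norm x ^ j)" using assms(1) by (simp add: summable_geometric)
  have le: "norm (of_real (b j) * x^j) \<le> norm x ^ j" for j
    using assms(2)[of j] by (simp add: norm_mult norm_power mult_left_le_one_le)
  have norm_summable: "summable (\<lambda>j. norm (of_real (b j) * x^j))"
    by (rule summable_comparison_test'[OF geometric]) (use le in simp)
  then show "summable (\<lambda>j. of_real (b j) * x^j)" by (rule summable_norm_cancel)
  have "norm (\<Sum>j. of_real (b j) * x^j) \<le> (\<Sum>j. norm (of_real (b j) * x^j))"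
    by (rule summable_norm[OF norm_summable])
  also have "\<dots> \<le> (\<Sum>j. norm x ^ j)" by (rule suminf_le[OF le norm_summable geometric])
  also have "\<dots> = 1 / (1 - norm x)" using assms(1) by (simp add: suminf_geometric)
  finally show "norm (\<Sum>j. of_real (b j) * x^j) \<le> 1 / (1 - norm x)" .
qed

text \<open>If the digit series vanishes, then \<open>x\<^sup>m E m\<close> is minus \<open>x\<^sup>4\<close> times its tail, which is
  small because \<open>|x| < 1\<close>.\<close>

lemma orbit_norm_le_of_sums_zero:
  fixes x :: "'a::{real_normed_field,banach}"
  assumes "x \<noteq> 0" "norm x < 1" "E 0 = 0" "\<And>m. E (Suc m) = E m / x + of_int (dd m) * x^3"
    and "\<And>j. \<bar>dd j\<bar> \<le> 1" "(\<lambda>j. of_int (dd j) * x^j) sums 0"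
  shows "norm (E m) \<le> orbit_bound (norm x)"
proof -
  define tail where "tail = (\<Sum>i. of_real (of_int (dd (i + m))) * x^i)"
  have coeffs: "\<bar>real_of_int (dd (i + m))\<bar> \<le> 1" for i
    using assms(5)[of "i + m"] by linarith
  have "(\<lambda>i. x^m * (of_real (of_int (dd (i + m))) * x^i)) sums (x^m * tail)"
    unfolding tail_def
    by (rule sums_mult, rule summable_sums, rule power_series_bounded_coeffs(1)[OF assms(2) coeffs])
  then have "(\<lambda>i. of_int (dd (i + m)) * x^(i + m)) sums (x^m * tail)"
    by (simp add: power_add algebra_simps)
  moreover have "(\<lambda>i. of_int (dd (i + m)) * x^(i + m)) sums (0 - (\<Sum>j<m. of_int (dd j) * x^j))"
    by (rule sums_split_initial_segment[OF assms(6)])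
  ultimately have "(\<Sum>j<m. of_int (dd j) * x^j) = - (x^m * tail)"
    using sums_unique2 by fastforce
  then have "x^m * E m = x^m * (- (x^4 * tail))"
    unfolding orbit_scaled_eq_partial_sum[of x E dd, OF assms(1,3,4)] by (simp add: algebra_simps)
  then have "E m = - (x^4 * tail)" using assms(1) by (metis mult_left_cancel power_not_zero)
  then have "norm (E m) = norm x ^ 4 * norm tail" by (simp add: norm_mult norm_power)
  also have "\<dots> \<le> norm x ^ 4 * (1 / (1 - norm x))"
    unfolding tail_def by (intro mult_left_mono power_series_bounded_coeffs(2)[OF assms(2) coeffs]) simp
  finally show ?thesis by (simp add: orbit_bound_def)
qed

lemma sums_zero_of_orbit_bounded:
  fixes x :: "'a::{real_normed_field,banach}"
  assumes "x \<noteq> 0" "norm x < 1" "E 0 = 0" "\<And>m. E (Suc m) = E m / x + of_int (dd m) * x^3"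
    and "\<And>m. norm (E m) \<le> M"
  shows "(\<lambda>j. of_int (dd j) * x^j) sums 0"
  unfolding sums_def
proof (rule Lim_null_comparison)
  have "norm (\<Sum>j<m. of_int (dd j) * x^j) \<le> M / norm x ^ 4 * norm x ^ m" for m
  proof -
    have "norm x ^ 4 * norm (\<Sum>j<m. of_int (dd j) * x^j) = norm x ^ m * norm (E m)"
      using arg_cong[OF orbit_scaled_eq_partial_sum[of x E dd, OF assms(1,3,4)], of norm, of m]
      by (simp add: norm_mult norm_power)
    also have "\<dots> \<le> norm x ^ m * M" by (rule mult_left_mono[OF assms(5)]) simp
    finally show ?thesis using assms(1) by (simp add: field_simps)
  qed
  then show "\<forall>\<^sub>F m in sequentially. norm (\<Sum>j<m. of_int (dd j) * x^j) \<le> M / norm x ^ 4 * norm x ^ m"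
    by simp
  show "(\<lambda>m. M / norm x ^ 4 * norm x ^ m) \<longlonglongrightarrow> 0"
    by (rule tendsto_mult_right_zero, rule LIMSEQ_power_zero) (use assms(2) in simp)
qed

lemma sums_Pair:
  fixes f :: "nat \<Rightarrow> 'a::real_normed_vector \<times> 'b::real_normed_vector"
  assumes "(\<lambda>n. fst (f n)) sums a" "(\<lambda>n. snd (f n)) sums b"
  shows "f sums (a, b)"
proof -
  have "(\<lambda>n. (\<Sum>i<n. fst (f i), \<Sum>i<n. snd (f i))) \<longlonglongrightarrow> (a, b)"
    using assms unfolding sums_def by (rule tendsto_Pair)
  moreover have "(\<lambda>n. (\<Sum>i<n. fst (f i), \<Sum>i<n. snd (f i))) = (\<lambda>n. \<Sum>i<n. f i)"
    by (auto simp: prod_eq_iff fst_sum snd_sum)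
  ultimately show ?thesis unfolding sums_def by simp
qed

lemma power_series_eq_iff_diff_sums_zero:
  fixes x :: "'a::{real_normed_field,banach}"
  assumes "norm x < 1" "\<And>n. \<bar>a n\<bar> \<le> 1" "\<And>n. \<bar>b n\<bar> \<le> 1"
  shows "(\<Sum>n. of_real (a n) * x^n) = (\<Sum>n. of_real (b n) * x^n) \<longleftrightarrow> (\<lambda>n. of_real (a n - b n) * x^n) sums 0"
proof -
  have "(\<lambda>n. of_real (a n) * x^n - of_real (b n) * x^n) sums ((\<Sum>n. of_real (a n) * x^n) - (\<Sum>n. of_real (b n) * x^n))"
    by (intro sums_diff summable_sums power_series_bounded_coeffs(1) assms)
  then have "(\<lambda>n. of_real (a n - b n) * x^n) sums ((\<Sum>n. of_real (a n) * x^n) - (\<Sum>n. of_real (b n) * x^n))"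
    by (simp add: algebra_simps)
  then show ?thesis using sums_unique2 by fastforce
qed

section \<open>Integer coordinates and the finite search\<close>

fun quad_val :: "int quad \<Rightarrow> 'a::comm_ring_1 \<Rightarrow> 'a" where
  "quad_val (c0, c1, c2, c3) x = of_int c0 + of_int c1 * x + of_int c2 * x^2 + of_int c3 * x^3"

lemma quad_val_real: "quad_val c (x::real) = quad_comb c (1, x, x^2, x^3)"
  by (cases c rule: prod_cases4) simp

lemma Re_quad_val: "Re (quad_val c z) = quad_comb c (1, Re z, Re (z^2), Re (z^3))"
  and Im_quad_val: "Im (quad_val c z) = quad_comb c (0, Im z, Im (z^2), Im (z^3))"
  by (cases c rule: prod_cases4; simp)+

text \<open>The box condition is an over-approximation, checkable in integer arithmetic,
  of \<open>\<bar>c(\<beta>\<^sub>2)\<bar> \<le> orbit_bound \<bar>\<beta>\<^sub>2\<bar>\<close> and \<open>\<bar>c(\<beta>\<^sub>3)\<bar> \<le> orbit_bound \<bar>\<beta>\<^sub>3\<bar>\<close>.\<close>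

definition quad_box :: "int quad \<Rightarrow> bool" where
  "quad_box c \<longleftrightarrow>
     fst (comb_encl c beta2_powers_encl) \<le> 1600321413865 \<and>
     -1600321413865 \<le> snd (comb_encl c beta2_powers_encl) \<and>
     sq_lower (comb_encl c Re_beta3_powers_encl) + sq_lower (comb_encl c Im_beta3_powers_encl)
       \<le> 2467103743153^2"

lemma quad_box_of_conjugates_bounded:
  assumes "\<bar>quad_val c beta2\<bar> \<le> orbit_bound \<bar>beta2\<bar>"
    and "cmod (quad_val c beta3) \<le> orbit_bound (cmod beta3)"
  shows "quad_box c"
proof -
  let ?S = "1000000000000 :: real"
  have "enclosed (quad_val c beta2) (comb_encl c beta2_powers_encl)"
    unfolding quad_val_real by (rule enclosed_comb[OF enclosed4_beta2_powers])
  moreover have "?S * \<bar>quad_val c beta2\<bar> \<le> 1600321413865"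
    using assms(1) orbit_bound_beta2 by (smt (verit) mult_left_mono)
  ultimately have real_part: "fst (comb_encl c beta2_powers_encl) \<le> 1600321413865 \<and>
      -1600321413865 \<le> snd (comb_encl c beta2_powers_encl)"
    unfolding enclosed_def by (auto simp: abs_le_iff)
  let ?v = "quad_val c beta3"
  have "enclosed (Re ?v) (comb_encl c Re_beta3_powers_encl)" "enclosed (Im ?v) (comb_encl c Im_beta3_powers_encl)"
    unfolding Re_quad_val Im_quad_val by (rule enclosed_comb, rule enclosed4_beta3_powers)+
  then have "of_int (sq_lower (comb_encl c Re_beta3_powers_encl) + sq_lower (comb_encl c Im_beta3_powers_encl))
      \<le> (?S * Re ?v)^2 + (?S * Im ?v)^2"
    using sq_lower_le by (metis add_mono of_int_add)
  also have "\<dots> = (?S * cmod ?v)^2" by (simp add: power_mult_distrib cmod_power2 distrib_left)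
  also have "\<dots> \<le> 2467103743153^2"
  proof (rule power_mono)
    show "?S * cmod ?v \<le> 2467103743153" using assms(2) orbit_bound_beta3 by (smt (verit) mult_left_mono)
  qed simp
  finally have "real_of_int (sq_lower (comb_encl c Re_beta3_powers_encl) + sq_lower (comb_encl c Im_beta3_powers_encl))
      \<le> of_int (2467103743153^2)"
    by simp
  then have "sq_lower (comb_encl c Re_beta3_powers_encl) + sq_lower (comb_encl c Im_beta3_powers_encl)
      \<le> 2467103743153^2"
    by (simp only: of_int_le_iff)
  with real_part show ?thesis unfolding quad_box_def by blast
qed

text \<open>Coordinates of \<open>c(\<alpha>)/\<alpha> + d \<alpha>\<^sup>3\<close> in the basis \<open>1, \<alpha>, \<alpha>\<^sup>2, \<alpha>\<^sup>3\<close>, using \<open>1/\<alpha> = \<alpha>\<^sup>3 - \<alpha>\<^sup>2 - \<alpha> - 1\<close>.\<close>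

fun quad_step :: "int quad \<Rightarrow> int \<Rightarrow> int quad" where
  "quad_step (c0, c1, c2, c3) d = (c1 - c0, c2 - c0, c3 - c0, c0 + d)"

lemma quad_val_step:
  fixes x :: "'a::field"
  assumes "tetranacci_poly x = 0" "x \<noteq> 0"
  shows "quad_val (quad_step c d) x = quad_val c x / x + of_int d * x^3"
proof -
  obtain c0 c1 c2 c3 where c: "c = (c0, c1, c2, c3)" by (cases c rule: prod_cases4)
  have "quad_val c x / x = of_int c0 * inverse x + of_int c1 + of_int c2 * x + of_int c3 * x^2"
    using assms(2) unfolding c by (simp add: field_simps eval_nat_numeral)
  also have "\<dots> = of_int c0 * (x^3 - x^2 - x - 1) + of_int c1 + of_int c2 * x + of_int c3 * x^2"
    by (simp only: inverse_tetranacci_root[OF assms(1)])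
  finally show ?thesis unfolding c by (simp add: algebra_simps)
qed

fun box_viable :: "nat \<Rightarrow> int quad \<Rightarrow> bool" where
  "box_viable 0 c \<longleftrightarrow> quad_box c"
| "box_viable (Suc n) c \<longleftrightarrow> quad_box c \<and>
     (box_viable n (quad_step c (-1)) \<or> box_viable n (quad_step c 0) \<or> box_viable n (quad_step c 1))"

text \<open>The coordinates of the states of the automaton, the last three being those of
  \<open>\<alpha>\<^sup>-\<^sup>1 + 1 + \<alpha>\<^sup>2\<close>, \<open>\<alpha>\<^sup>-\<^sup>2 + \<alpha>\<^sup>-\<^sup>1 + \<alpha>\<close> and \<open>\<alpha>\<^sup>-\<^sup>3 + \<alpha>\<^sup>-\<^sup>2 + 1 + \<alpha>\<^sup>3\<close>.\<close>

fun quad_scale :: "int \<Rightarrow> int quad \<Rightarrow> int quad" where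
  "quad_scale s (c0, c1, c2, c3) = (s * c0, s * c1, s * c2, s * c3)"

definition digit_quads :: "int quad list" where
  "digit_quads = [(c0, c1, c2, c3). c0 \<leftarrow> [0, 1], c1 \<leftarrow> [0, 1], c2 \<leftarrow> [0, 1], c3 \<leftarrow> [0, 1],
     (c0, c1, c2, c3) \<noteq> (1, 1, 1, 1)]"

definition state_quads :: "int quad list" where
  "state_quads = concat (map (\<lambda>s. map (quad_scale s)
     (digit_quads @ [(0, -1, 0, 1), (-1, 0, 1, 0), (1, 2, 1, 0)])) [1, -1])"

text \<open>The point reached from \<open>0\<close> by \<open>k \<le> 4\<close> digits \<open>\<sigma>\<close>; \<open>run_quad \<sigma> 4\<close> is \<open>\<sigma> (1 + \<alpha> + \<alpha>\<^sup>2 + \<alpha>\<^sup>3)\<close>,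
  which is not a state.\<close>

definition run_quad :: "int \<Rightarrow> nat \<Rightarrow> int quad" where
  "run_quad \<sigma> k =
     (if 4 \<le> k then \<sigma> else 0, if 3 \<le> k then \<sigma> else 0, if 2 \<le> k then \<sigma> else 0, if 1 \<le> k then \<sigma> else 0)"

lemma quad_step_state_quads:
  assumes "s \<in> set state_quads" "d \<in> {-1, 0, 1}"
  shows "quad_step s d \<in> set state_quads \<or> quad_step s d = run_quad 1 4 \<or> quad_step s d = run_quad (-1) 4
    \<or> \<not> box_viable 8 (quad_step s d)"
proof -
  have "list_all (\<lambda>s. list_all (\<lambda>d. quad_step s d \<in> set state_quads \<or> quad_step s d = run_quad 1 4
    \<or> quad_step s d = run_quad (-1) 4 \<or> \<not> box_viable 8 (quad_step s d)) [-1, 0, 1]) state_quads"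
    by code_simp
  then show ?thesis using assms by (auto simp: list_all_iff)
qed

lemma quad_step_run_quad:
  assumes "s \<in> set state_quads" "d \<in> {-1, 0, 1}" "\<sigma> \<in> {-1, 1}" "k \<in> {1..4}"
    and "quad_step s d = run_quad \<sigma> k"
  shows "s = run_quad \<sigma> (k - 1) \<and> d = \<sigma>"
proof -
  have "list_all (\<lambda>s. list_all (\<lambda>d. list_all (\<lambda>\<sigma>. list_all (\<lambda>k.
      quad_step s d = run_quad \<sigma> k \<longrightarrow> s = run_quad \<sigma> (k - 1) \<and> d = \<sigma>) [1..<5]) [-1, 1]) [-1, 0, 1]) state_quads"
    by code_simp
  then show ?thesis using assms by (auto simp: list_all_iff)
qed

definition quad_emb :: "int quad \<Rightarrow> real \<times> complex" where
  "quad_emb c = (quad_val c beta2, quad_val c beta3)"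

lemma quad_emb_step: "quad_emb (quad_step c d) = div_alpha (quad_emb c) + of_int d *\<^sub>R apow 3"
  unfolding quad_emb_def div_alpha_def apow_def
  using quad_val_step[OF tetranacci_poly_beta2, of c d]
    quad_val_step[OF tetranacci_poly_beta3 beta3_nonzero, of c d] beta2_neg
  by (simp add: scaleR_conv_of_real)

lemma tetranacci_root_negative_powers:
  fixes x :: "'a::field"
  assumes "tetranacci_poly x = 0" "x \<noteq> 0"
  shows "x powi (-1) + x powi 0 + x powi 2 = quad_val (0, -1, 0, 1) x"
    and "x powi (-2) + x powi (-1) + x powi 1 = quad_val (-1, 0, 1, 0) x"
    and "x powi (-3) + x powi (-2) + x powi 0 + x powi 3 = quad_val (1, 2, 1, 0) x"
proof -
  have inv: "x powi (-int k) = (x^3 - x^2 - x - 1)^k" for k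
    by (simp add: power_int_minus inverse_tetranacci_root[OF assms(1)] flip: power_inverse)
  have "(x^3 - x^2 - x - 1)^2 + (x^3 - x^2 - x - 1) + x - (x^2 - 1) = (x^2 - x - 1) * tetranacci_poly x"
    "(x^3 - x^2 - x - 1)^3 + (x^3 - x^2 - x - 1)^2 + 1 + x^3 - (1 + 2*x + x^2)
       = (x^5 - 2*x^4 - x^3 + x^2 + 3*x) * tetranacci_poly x"
    unfolding tetranacci_poly_def by (simp_all add: algebra_simps eval_nat_numeral)
  then show "x powi (-1) + x powi 0 + x powi 2 = quad_val (0, -1, 0, 1) x"
    "x powi (-2) + x powi (-1) + x powi 1 = quad_val (-1, 0, 1, 0) x"
    "x powi (-3) + x powi (-2) + x powi 0 + x powi 3 = quad_val (1, 2, 1, 0) x"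
    using inv[of 2] inv[of 3] assms(1) by (simp_all add: algebra_simps inverse_tetranacci_root[OF assms(1)])
qed

lemma mem_digit_quads:
  assumes "(c0, c1, c2, c3) \<in> set digit_quads"
  shows "c0 \<in> {0, 1} \<and> c1 \<in> {0, 1} \<and> c2 \<in> {0, 1} \<and> c3 \<in> {0, 1} \<and> (c0, c1, c2, c3) \<noteq> (1, 1, 1, 1)"
  using assms unfolding digit_quads_def by auto

lemma quad_emb_scale: "quad_emb (quad_scale s c) = of_int s *\<^sub>R quad_emb c"
  by (cases c rule: prod_cases4) (simp add: quad_emb_def scaleR_conv_of_real algebra_simps)

lemma mem_set_concat_map_map:
  "x \<in> set (concat (map (\<lambda>s. map (f s) ys) xs)) \<longleftrightarrow> (\<exists>s\<in>set xs. \<exists>y\<in>set ys. x = f s y)"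
  by auto

lemma quad_emb_mem_states:
  assumes "c \<in> set state_quads"
  shows "quad_emb c \<in> states"
proof -
  have "\<exists>s\<in>set [1, -1]. \<exists>c'\<in>set (digit_quads @ [(0, -1, 0, 1), (-1, 0, 1, 0), (1, 2, 1, 0)]). c = quad_scale s c'"
    using assms unfolding state_quads_def mem_set_concat_map_map .
  then obtain s c' where s: "s \<in> {1, -1}" and c: "c = quad_scale s c'"
    and c': "c' \<in> set digit_quads \<or> c' \<in> set [(0, -1, 0, 1), (-1, 0, 1, 0), (1, 2, 1, 0)]"
    by (metis list.set(1,2) set_append Un_iff)
  obtain c0 c1 c2 c3 where c'_eq: "c' = (c0, c1, c2, c3)" by (cases c' rule: prod_cases4)
  have s': "real_of_int s \<in> {-1, 1}" using s by auto
  from c' show ?thesis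
  proof
    assume "c' \<in> set digit_quads"
    then have digits: "c0 \<in> {0, 1} \<and> c1 \<in> {0, 1} \<and> c2 \<in> {0, 1} \<and> c3 \<in> {0, 1} \<and> (c0, c1, c2, c3) \<noteq> (1, 1, 1, 1)"
      unfolding c'_eq by (rule mem_digit_quads)
    define cf where "cf i = real_of_int ([c0, c1, c2, c3] ! i)" for i
    have "quad_emb c' = (\<Sum>i<4. cf i *\<^sub>R apow (int i))"
      unfolding c'_eq quad_emb_def apow_def cf_def by (simp add: eval_nat_numeral scaleR_conv_of_real)
    moreover have "\<forall>i<4. cf i \<in> {0, 1}" "\<not> (\<forall>i<4. cf i = 1)"
      using digits unfolding cf_def by (auto simp: less_Suc_eq numeral_eq_Suc)
    ultimately show ?thesis unfolding c quad_emb_scale states_def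
      by (intro UnI1 CollectI exI[of _ "real_of_int s"] exI[of _ cf]) (use s' in simp)
  next
    assume "c' \<in> set [(0, -1, 0, 1), (-1, 0, 1, 0), (1, 2, 1, 0)]"
    then have "quad_emb c' \<in> {apow (-1) + apow 0 + apow 2, apow (-2) + apow (-1) + apow 1,
        apow (-3) + apow (-2) + apow 0 + apow 3}"
      using tetranacci_root_negative_powers[OF tetranacci_poly_beta2]
        tetranacci_root_negative_powers[OF tetranacci_poly_beta3 beta3_nonzero] beta2_neg
      unfolding quad_emb_def apow_def by auto
    then show ?thesis unfolding c quad_emb_scale states_def
      by (intro UnI2 CollectI exI[of _ "real_of_int s"] exI[of _ "quad_emb c'"]) (use s' in simp)
  qed
qed

lemma finite_states: "finite states"
proof -
  let ?digits = "\<lambda>(s, a, b, c, d). s *\<^sub>R (a *\<^sub>R apow 0 + b *\<^sub>R apow 1 + c *\<^sub>R apow 2 + d *\<^sub>R apow 3)"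
  let ?special = "{apow (-1) + apow 0 + apow 2, apow (-2) + apow (-1) + apow 1, apow (-3) + apow (-2) + apow 0 + apow 3}"
  have "states \<subseteq> ?digits ` ({-1, 1} \<times> {0, 1} \<times> {0, 1} \<times> {0, 1} \<times> {0, 1})
      \<union> (\<lambda>(s, x). s *\<^sub>R x) ` ({-1, 1} \<times> ?special)"
  proof
    fix x assume "x \<in> states"
    then consider s c where "x = s *\<^sub>R (\<Sum>i<4. c i *\<^sub>R apow (int i))" "s \<in> {-1, 1}" "\<forall>i<4. c i \<in> {0, 1}"
      | s y where "x = s *\<^sub>R y" "s \<in> {-1, 1}" "y \<in> ?special"
      unfolding states_def by blast
    then show "x \<in> ?digits ` ({-1, 1} \<times> {0, 1} \<times> {0, 1} \<times> {0, 1} \<times> {0, 1}) \<union> (\<lambda>(s, x). s *\<^sub>R x) ` ({-1, 1} \<times> ?special)"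
    proof cases
      case (1 s c)
      then have "x = ?digits (s, c 0, c 1, c 2, c 3)" by (simp add: eval_nat_numeral)
      moreover have "(s, c 0, c 1, c 2, c 3) \<in> {-1, 1} \<times> {0, 1} \<times> {0, 1} \<times> {0, 1} \<times> {0, 1}"
        unfolding mem_Times_iff
        using 1(2) 1(3)[rule_format, of 0] 1(3)[rule_format, of 1] 1(3)[rule_format, of 2] 1(3)[rule_format, of 3]
        by simp
      ultimately show ?thesis by blast
    next
      case (2 s y)
      then show ?thesis by force
    qed
  qed
  then show ?thesis by (rule finite_subset) simp
qed

lemma states_bounded: "\<exists>M. \<forall>s\<in>states. norm (fst s) \<le> M \<and> norm (snd s) \<le> M"
proof -
  obtain M where M: "\<forall>s\<in>states. norm s \<le> M"
    using finite_imp_bounded[OF finite_states] unfolding bounded_iff by blast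
  have "norm (fst s) \<le> M \<and> norm (snd s) \<le> M" if "s \<in> states" for s
    using M that norm_fst_le[where x = "fst s" and y = "snd s"] norm_snd_le[where x = "fst s" and y = "snd s"]
    by force
  then show ?thesis by blast
qed

section \<open>The automaton recognises equal values\<close>

definition conjugate_series_vanish :: "(nat \<Rightarrow> int) \<Rightarrow> bool" where
  "conjugate_series_vanish dd \<longleftrightarrow>
     (\<lambda>n. of_int (dd n) * beta2^n) sums 0 \<and> (\<lambda>n. of_int (dd n) * beta3^n) sums 0"

definition digit_diff :: "int \<Rightarrow> (int \<Rightarrow> nat) \<Rightarrow> (int \<Rightarrow> nat) \<Rightarrow> nat \<Rightarrow> int" where
  "digit_diff l eps eps' n = int (eps (l + int n)) - int (eps' (l + int n))"

lemma aval_eq_scaled_series: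
  assumes "\<forall>i\<ge>l. eps i \<in> {0, 1}"
  shows "aval l eps = (beta2 powi l * (\<Sum>n. of_real (real (eps (l + int n))) * beta2^n),
                       beta3 powi l * (\<Sum>n. of_real (real (eps (l + int n))) * beta3^n))"
proof -
  have coeffs: "\<bar>real (eps (l + int n))\<bar> \<le> 1" for n using assms[rule_format, of "l + int n"] by auto
  have series: "(\<lambda>n. of_real (real (eps (l + int n))) * x^n) sums (\<Sum>n. of_real (real (eps (l + int n))) * x^n)"
    if "norm x < 1" for x :: "'a::{real_normed_field,banach}"
    by (rule summable_sums, rule power_series_bounded_coeffs(1)[OF that coeffs])
  let ?term = "\<lambda>n. real (eps (l + int n)) *\<^sub>R apow (l + int n)"
  have "(\<lambda>n. fst (?term n)) = (\<lambda>n. beta2 powi l * (of_real (real (eps (l + int n))) * beta2^n))"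
    using beta2_neg by (auto simp: apow_def power_int_add)
  then have "(\<lambda>n. fst (?term n)) sums (beta2 powi l * (\<Sum>n. of_real (real (eps (l + int n))) * beta2^n))"
    using sums_mult[OF series[OF abs_beta2_less_1[folded real_norm_def]]] by simp
  moreover have "(\<lambda>n. snd (?term n)) = (\<lambda>n. beta3 powi l * (of_real (real (eps (l + int n))) * beta3^n))"
    using beta3_nonzero by (auto simp: apow_def power_int_add scaleR_conv_of_real)
  then have "(\<lambda>n. snd (?term n)) sums (beta3 powi l * (\<Sum>n. of_real (real (eps (l + int n))) * beta3^n))"
    using sums_mult[OF series[OF cmod_beta3_less_1]] by simp
  ultimately have "?term sums
      (beta2 powi l * (\<Sum>n. of_real (real (eps (l + int n))) * beta2^n),
       beta3 powi l * (\<Sum>n. of_real (real (eps (l + int n))) * beta3^n))"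
    by (rule sums_Pair)
  then show ?thesis unfolding aval_def by (rule sums_unique[symmetric])
qed

lemma aval_eq_iff_conjugate_series_vanish:
  assumes "\<forall>i\<ge>l. eps i \<in> {0, 1}" "\<forall>i\<ge>l. eps' i \<in> {0, 1}"
  shows "aval l eps = aval l eps' \<longleftrightarrow> conjugate_series_vanish (digit_diff l eps eps')"
proof -
  define a where "a n = real (eps (l + int n))" for n
  define b where "b n = real (eps' (l + int n))" for n
  have coeffs: "\<bar>a n\<bar> \<le> 1" "\<bar>b n\<bar> \<le> 1" for n
    using assms(1)[rule_format, of "l + int n"] assms(2)[rule_format, of "l + int n"]
    unfolding a_def b_def by auto
  have diff: "(of_real (a n - b n) :: 'a::real_normed_algebra_1) = of_int (digit_diff l eps eps' n)" for n
    unfolding a_def b_def digit_diff_def by simp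
  have "aval l eps = aval l eps' \<longleftrightarrow>
      (\<Sum>n. of_real (a n) * beta2^n) = (\<Sum>n. of_real (b n) * beta2^n) \<and>
      (\<Sum>n. of_real (a n) * beta3^n) = (\<Sum>n. of_real (b n) * beta3^n)"
    unfolding aval_eq_scaled_series[OF assms(1)] aval_eq_scaled_series[OF assms(2)] a_def b_def
    using beta2_neg beta3_nonzero by simp
  also have "\<dots> \<longleftrightarrow> conjugate_series_vanish (digit_diff l eps eps')"
    unfolding conjugate_series_vanish_def diff[symmetric]
    using power_series_eq_iff_diff_sums_zero[of beta2 a b] power_series_eq_iff_diff_sums_zero[of beta3 a b]
      abs_beta2_less_1 cmod_beta3_less_1 coeffs
    by simp
  finally show ?thesis .
qed

lemma conjugate_series_vanish_of_path:
  assumes "is_path_from_init l eps eps'"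
  shows "conjugate_series_vanish (digit_diff l eps eps')"
proof -
  let ?dd = "digit_diff l eps eps'"
  obtain e where e0: "e l = 0" and edge: "\<And>n. l \<le> n \<Longrightarrow> e n \<in> states \<and> is_edge (e n) (eps n, eps' n) (e (n + 1))"
    using assms unfolding is_path_from_init_def by blast
  define E where "E m = e (l + int m)" for m
  have step: "E (Suc m) = div_alpha (E m) + of_int (?dd m) *\<^sub>R apow 3" for m
    using edge[of "l + int m"] unfolding is_edge_def E_def digit_diff_def by (simp add: ac_simps)
  obtain M where M: "\<forall>s\<in>states. norm (fst s) \<le> M \<and> norm (snd s) \<le> M"
    using states_bounded by blast
  have E0: "E 0 = 0" using e0 by (simp add: E_def)
  have "E m \<in> states" for m using edge[of "l + int m"] by (simp add: E_def)
  then have bounded: "norm (fst (E m)) \<le> M" "norm (snd (E m)) \<le> M" for m using M by auto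
  have "(\<lambda>n. of_int (?dd n) * beta2^n) sums 0"
    by (rule sums_zero_of_orbit_bounded[of beta2 "\<lambda>m. fst (E m)"])
       (use beta2_neg abs_beta2_less_1 bounded in \<open>simp_all add: step div_alpha_def apow_def E0\<close>)
  moreover have "(\<lambda>n. of_int (?dd n) * beta3^n) sums 0"
    by (rule sums_zero_of_orbit_bounded[of beta3 "\<lambda>m. snd (E m)"])
       (use beta3_nonzero cmod_beta3_less_1 bounded in \<open>simp_all add: step div_alpha_def apow_def E0 scaleR_conv_of_real\<close>)
  ultimately show ?thesis unfolding conjugate_series_vanish_def ..
qed

primrec quad_orbit :: "(nat \<Rightarrow> int) \<Rightarrow> nat \<Rightarrow> int quad" where
  "quad_orbit dd 0 = (0, 0, 0, 0)"
| "quad_orbit dd (Suc m) = quad_step (quad_orbit dd m) (dd m)"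

lemma quad_box_orbit:
  assumes "conjugate_series_vanish dd" "\<And>j. dd j \<in> {-1, 0, 1}"
  shows "quad_box (quad_orbit dd m)"
proof (rule quad_box_of_conjugates_bounded)
  have digits: "\<bar>dd j\<bar> \<le> 1" for j using assms(2)[of j] by auto
  show "\<bar>quad_val (quad_orbit dd m) beta2\<bar> \<le> orbit_bound \<bar>beta2\<bar>"
    using orbit_norm_le_of_sums_zero[of beta2 "\<lambda>m. quad_val (quad_orbit dd m) beta2" dd m]
      tetranacci_poly_beta2 beta2_neg abs_beta2_less_1 assms(1) digits
    by (simp add: quad_val_step conjugate_series_vanish_def)
  show "cmod (quad_val (quad_orbit dd m) beta3) \<le> orbit_bound (cmod beta3)"
    using orbit_norm_le_of_sums_zero[of beta3 "\<lambda>m. quad_val (quad_orbit dd m) beta3" dd m]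
      tetranacci_poly_beta3 beta3_nonzero cmod_beta3_less_1 assms(1) digits
    by (simp add: quad_val_step conjugate_series_vanish_def)
qed

lemma box_viable_orbit:
  assumes "\<And>m. quad_box (quad_orbit dd m)" "\<And>j. dd j \<in> {-1, 0, 1}"
  shows "box_viable k (quad_orbit dd m)"
proof (induction k arbitrary: m)
  case 0
  then show ?case using assms(1) by simp
next
  case (Suc k)
  then have "box_viable k (quad_step (quad_orbit dd m) (dd m))" by (metis quad_orbit.simps(2))
  then show ?case using assms(1)[of m] assms(2)[of m] by auto
qed

lemma quad_orbit_run:
  assumes "\<forall>j<m. quad_orbit dd j \<in> set state_quads" "\<And>j. dd j \<in> {-1, 0, 1}" "\<sigma> \<in> {-1, 1}" "k \<le> 4"
    and "quad_orbit dd m = run_quad \<sigma> k"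
  shows "k \<le> m \<and> (\<forall>i\<in>{1..k}. dd (m - i) = \<sigma>)"
  using assms(1,4,5)
proof (induction k arbitrary: m)
  case 0
  then show ?case by simp
next
  case (Suc k)
  have "quad_orbit dd m \<noteq> (0, 0, 0, 0)" using Suc.prems(3) assms(3) unfolding run_quad_def by auto
  then obtain m' where m: "m = Suc m'" by (cases m) auto
  have last: "quad_orbit dd m' = run_quad \<sigma> k \<and> dd m' = \<sigma>"
    using quad_step_run_quad[of "quad_orbit dd m'" "dd m'" \<sigma> "Suc k"] Suc.prems assms(2,3) m by auto
  then have earlier: "k \<le> m' \<and> (\<forall>i\<in>{1..k}. dd (m' - i) = \<sigma>)"
    using Suc.IH[of m'] Suc.prems m by auto
  have "dd (Suc m' - i) = \<sigma>" if "i \<in> {1..Suc k}" for i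
  proof (cases "i = 1")
    case True
    then show ?thesis using last by simp
  next
    case False
    then have "i - 1 \<in> {1..k}" "Suc m' - i = m' - (i - 1)" using that by auto
    then show ?thesis using earlier by (metis (no_types, lifting))
  qed
  then show ?case using earlier unfolding m by simp
qed

lemma quad_orbit_in_state_quads:
  assumes "conjugate_series_vanish dd" "\<And>j. dd j \<in> {-1, 0, 1}"
    and "\<And>\<sigma> j. \<sigma> \<in> {-1, 1} \<Longrightarrow> \<not> (dd j = \<sigma> \<and> dd (j + 1) = \<sigma> \<and> dd (j + 2) = \<sigma> \<and> dd (j + 3) = \<sigma>)"
  shows "quad_orbit dd m \<in> set state_quads"
proof (induction m rule: less_induct)
  case (less m)
  show ?case
  proof (cases m)
    case 0
    then show ?thesis by (simp add: state_quads_def digit_quads_def)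
  next
    case (Suc k)
    have earlier: "\<forall>j<Suc k. quad_orbit dd j \<in> set state_quads" using less Suc by simp
    have viable: "box_viable 8 (quad_orbit dd (Suc k))"
      using box_viable_orbit quad_box_orbit assms(1,2) by blast
    have "quad_orbit dd (Suc k) \<noteq> run_quad \<sigma> 4" if \<sigma>: "\<sigma> \<in> {-1, 1}" for \<sigma>
    proof
      assume "quad_orbit dd (Suc k) = run_quad \<sigma> 4"
      then have "4 \<le> Suc k" "\<forall>i\<in>{1..4}. dd (Suc k - i) = \<sigma>"
        using quad_orbit_run[OF earlier assms(2) \<sigma>, where k = 4] by simp_all
      then have run: "dd (k - 3 + r) = \<sigma>" if "r < 4" for r
      proof -
        have "4 - r \<in> {1..4}" "Suc k - (4 - r) = k - 3 + r" using that \<open>4 \<le> Suc k\<close> by auto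
        then show ?thesis using \<open>\<forall>i\<in>{1..4}. dd (Suc k - i) = \<sigma>\<close> by metis
      qed
      then show False using assms(3)[OF \<sigma>, of "k - 3"] run[of 0] run[of 1] run[of 2] run[of 3] by simp
    qed
    then show ?thesis
      using quad_step_state_quads[of "quad_orbit dd k" "dd k"] earlier assms(2) viable Suc by auto
  qed
qed

lemma digit_diff_mem:
  assumes "\<forall>i\<ge>l. eps i \<in> {0, 1}" "\<forall>i\<ge>l. eps' i \<in> {0, 1}"
  shows "digit_diff l eps eps' j \<in> {-1, 0, 1}"
  using assms(1)[rule_format, of "l + int j"] assms(2)[rule_format, of "l + int j"]
  unfolding digit_diff_def by auto

lemma digit_diff_no_run:
  assumes "in_Dinf l eps" "in_Dinf l eps'" "\<sigma> \<in> {-1, 1}"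
  shows "\<not> (digit_diff l eps eps' j = \<sigma> \<and> digit_diff l eps eps' (j + 1) = \<sigma> \<and>
    digit_diff l eps eps' (j + 2) = \<sigma> \<and> digit_diff l eps eps' (j + 3) = \<sigma>)"
proof
  let ?dd = "digit_diff l eps eps'"
  assume run: "?dd j = \<sigma> \<and> ?dd (j + 1) = \<sigma> \<and> ?dd (j + 2) = \<sigma> \<and> ?dd (j + 3) = \<sigma>"
  have digits: "eps i \<in> {0, 1}" "eps' i \<in> {0, 1}" if "l \<le> i" for i
    using assms(1,2) that unfolding in_Dinf_def by auto
  have forced: "if \<sigma> = 1 then eps (l + int n) = 1 else eps' (l + int n) = 1" if "?dd n = \<sigma>" for n
    using that assms(3) digits[of "l + int n"] unfolding digit_diff_def by auto
  have no_run: "\<not> (f (l + int j) = 1 \<and> f (l + int (j + 1)) = 1 \<and> f (l + int (j + 2)) = 1 \<and> f (l + int (j + 3)) = 1)"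
    if "in_Dinf l f" for f
  proof -
    have "l + int j + 1 = l + int (j + 1)" "l + int j + 2 = l + int (j + 2)" "l + int j + 3 = l + int (j + 3)"
      by simp_all
    then show ?thesis using that unfolding in_Dinf_def by (metis le_add_same_cancel1 of_nat_0_le_iff)
  qed
  show False
    using no_run[OF assms(1)] no_run[OF assms(2)] run
      forced[of j] forced[of "j + 1"] forced[of "j + 2"] forced[of "j + 3"]
    by (simp split: if_splits)
qed

lemma path_of_orbit_in_state_quads:
  assumes "\<forall>i\<ge>l. eps i \<in> {0, 1}" "\<forall>i\<ge>l. eps' i \<in> {0, 1}"
    and "\<And>m. quad_orbit (digit_diff l eps eps') m \<in> set state_quads"
  shows "is_path_from_init l eps eps'"
proof -
  let ?C = "quad_orbit (digit_diff l eps eps')"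
  define e where "e n = quad_emb (?C (nat (n - l)))" for n
  show ?thesis
    unfolding is_path_from_init_def
  proof (intro exI[of _ e] conjI allI impI)
    show "e l = 0" by (simp add: e_def quad_emb_def zero_prod_def)
    fix n assume "l \<le> n"
    then obtain m where n: "n = l + int m" using zle_iff_zadd by blast
    have e_n: "e n = quad_emb (?C m)" and e_succ: "e (n + 1) = quad_emb (?C (Suc m))"
      unfolding e_def n by (simp_all add: nat_add_distrib)
    show "e n \<in> states" unfolding e_n by (rule quad_emb_mem_states[OF assms(3)])
    moreover have "e (n + 1) \<in> states" unfolding e_succ by (rule quad_emb_mem_states[OF assms(3)])
    moreover have "e (n + 1) = div_alpha (e n) + (real (eps n) - real (eps' n)) *\<^sub>R apow 3"
      unfolding e_n e_succ by (simp add: quad_emb_step digit_diff_def n)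
    ultimately show "is_edge (e n) (eps n, eps' n) (e (n + 1))"
      unfolding is_edge_def using assms(1,2) \<open>l \<le> n\<close> by auto
  qed
qed

theorem corollary3p4:
  fixes l :: int and eps eps' :: "int \<Rightarrow> nat"
  assumes "in_Dinf l eps" and "in_Dinf l eps'"
  shows "aval l eps = aval l eps' \<longleftrightarrow> is_path_from_init l eps eps'"
proof
  have digits: "\<forall>i\<ge>l. eps i \<in> {0, 1}" "\<forall>i\<ge>l. eps' i \<in> {0, 1}"
    using assms unfolding in_Dinf_def by auto
  show "is_path_from_init l eps eps'" if "aval l eps = aval l eps'"
  proof (rule path_of_orbit_in_state_quads[OF digits])
    fix m
    show "quad_orbit (digit_diff l eps eps') m \<in> set state_quads"
      by (rule quad_orbit_in_state_quads)
         (use that aval_eq_iff_conjugate_series_vanish[OF digits] digit_diff_mem[OF digits]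
           digit_diff_no_run[OF assms] in auto)
  qed
  show "aval l eps = aval l eps'" if "is_path_from_init l eps eps'"
    using that conjugate_series_vanish_of_path aval_eq_iff_conjugate_series_vanish[OF digits] by blast
qed

end
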